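(* Let $G$ be a connected graph with $|V(G)|\ge 3$ and $L(G)=2l(G)$, and let $F_L,F_l$ be maximum matchings of $G$ with $\nu(G\setminus F_L)=L(G)$ and $\nu(G\setminus F_l)=l(G)$. Then: (a) if $u\in V(F_l)\setminus V(F_L)$, then $\deg(u)\in\{1,2\}$; moreover, if $\deg(u)=2$, and $v,w$ are the two neighbours of $u$ with $(u,w)\in F_l$, then $\deg(w)=2$ and $(v,w)\in F_L$; (b) if $u\in V(F_L)\setminus V(F_l)$, then $\deg(u)\ge 2$.
   Context: Graphs are finite, undirected, without loops or multiple edges. $\nu(G)$ denotes the maximum size of a matching of $G$; a matching is maximum if it has $\nu(G)$ edges. For $F\subseteq E(G)$, $G\setminus F$ is the graph with vertex set $V(G)$ and edge set $E(G)\setminus F$, and $V(F)$ is the set of vertices incident to some edge of $F$. Define $L(G)=\max\{\nu(G\setminus F): F \text{ a maximum matching of } G\}$ and $l(G)=\min\{\nu(G\setminus F): F \text{ a maximum matching of } G\}$. *)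

theory Defs
  imports Main
begin

definition graph :: "'a set \<Rightarrow> 'a set set \<Rightarrow> bool" where
  "graph V E \<longleftrightarrow> finite V \<and> (\<forall>e\<in>E. \<exists>u v. e = {u, v} \<and> u \<noteq> v \<and> u \<in> V \<and> v \<in> V)"

definition adj_rel :: "'a set set \<Rightarrow> ('a \<times> 'a) set" where
  "adj_rel E = {(u, v). {u, v} \<in> E}"

definition connected_graph :: "'a set \<Rightarrow> 'a set set \<Rightarrow> bool" where
  "connected_graph V E \<longleftrightarrow> (\<forall>u\<in>V. \<forall>v\<in>V. (u, v) \<in> (adj_rel E)\<^sup>*)"

definition matching :: "'a set set \<Rightarrow> 'a set set \<Rightarrow> bool" where
  "matching E M \<longleftrightarrow> M \<subseteq> E \<and> (\<forall>e1\<in>M. \<forall>e2\<in>M. e1 \<noteq> e2 \<longrightarrow> e1 \<inter> e2 = {})"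

text \<open>nu E: maximum size of a matching (the graph G minus F has the same vertex set
  and edge set E - F, and nu only depends on the edge set).\<close>
definition nu :: "'a set set \<Rightarrow> nat" where
  "nu E = Max (card ` {M. matching E M})"

definition max_matching :: "'a set set \<Rightarrow> 'a set set \<Rightarrow> bool" where
  "max_matching E M \<longleftrightarrow> matching E M \<and> card M = nu E"

definition L_param :: "'a set set \<Rightarrow> nat" where
  "L_param E = Max {nu (E - F) | F. max_matching E F}"

definition l_param :: "'a set set \<Rightarrow> nat" where
  "l_param E = Min {nu (E - F) | F. max_matching E F}"

definition Vs :: "'a set set \<Rightarrow> 'a set" where
  "Vs F = \<Union> F"

definition deg :: "'a set set \<Rightarrow> 'a \<Rightarrow> nat" where
  "deg E u = card {e \<in> E. u \<in> e}"

end

theory Submission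
  imports Defs
begin

text \<open>
  The proof rests on one counting
  argument: every maximum matching M of E - F has 2l edges, contains Fl - F,
  and M - Fl and F - Fl are both maximum matchings (of size l) of E - Fl.
  In particular no vertex of an edge of Fl - F is covered by M - Fl.
  Everything else comes from the fact that a maximum matching admits no
  "exchange": one cannot delete one of its edges and add two disjoint edges
  that are free with respect to the rest (a special case is the absence of
  augmenting paths of length three).  Applying this to F, Fl and M - Fl gives
  the structural facts about vertices covered by only one of F, Fl, and the
  degree statements follow by counting neighbours.
\<close>

lemma matching_subset:
  "matching E M \<Longrightarrow> N \<subseteq> M \<Longrightarrow> N \<subseteq> E' \<Longrightarrow> matching E' N"
  unfolding matching_def by blast

lemma matching_partner_unique:
  assumes "matching E M" "{a, b} \<in> M" "{a, c} \<in> M"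
  shows "b = c"
  using assms unfolding matching_def by (metis Int_iff doubleton_eq_iff empty_iff insertI1)

lemma matching_vertex_unique:
  assumes "matching E M" "e \<in> M" "a \<in> e"
  shows "a \<notin> \<Union>(M - {e})"
  using assms unfolding matching_def by blast

lemma matching_insert:
  assumes "matching E M" "f \<in> E" "f \<inter> \<Union>M = {}"
  shows "matching E (insert f M)"
  using assms unfolding matching_def by blast

lemma card_insert_fresh_edge:
  assumes "finite M" "f \<noteq> {}" "f \<inter> \<Union>M = {}"
  shows "card (insert f M) = Suc (card M)"
  using assms by (subst card_insert_disjoint) auto

lemma finite_matchings: "finite E \<Longrightarrow> finite {M. matching E M}"
  by (rule finite_subset[of _ "Pow E"]) (auto simp: matching_def)

lemma nu_upper: "finite E \<Longrightarrow> matching E M \<Longrightarrow> card M \<le> nu E"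
  unfolding nu_def by (rule Max_ge) (auto simp: finite_matchings)

lemma nu_attained:
  assumes "finite E"
  shows "\<exists>M. max_matching E M"
proof -
  have "matching E {}" by (simp add: matching_def)
  then have "nu E \<in> card ` {M. matching E M}"
    unfolding nu_def using assms by (intro Max_in) (auto simp: finite_matchings)
  then show ?thesis by (auto simp: max_matching_def)
qed

lemma max_matching_finite: "finite E \<Longrightarrow> max_matching E M \<Longrightarrow> finite M"
  by (auto simp: max_matching_def matching_def intro: finite_subset)

lemma max_matching_no_augment:
  assumes "finite E" "max_matching E N" "f \<in> E" "f \<noteq> {}"
  shows "f \<inter> \<Union>N \<noteq> {}"
proof
  assume free: "f \<inter> \<Union>N = {}"
  have "matching E (insert f N)"
    using assms free by (intro matching_insert) (auto simp: max_matching_def)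
  then have "card (insert f N) \<le> card N"
    using assms nu_upper by (auto simp: max_matching_def)
  moreover have "card (insert f N) = Suc (card N)"
    using assms free max_matching_finite by (intro card_insert_fresh_edge) auto
  ultimately show False by simp
qed

lemma max_matching_replace:
  assumes fin: "finite E" and N: "max_matching E N" and "e \<in> N" "f \<in> E" "f \<noteq> {}"
    and free: "f \<inter> \<Union>(N - {e}) = {}"
  shows "max_matching E (insert f (N - {e}))"
proof -
  have finN: "finite N" using fin N by (rule max_matching_finite)
  have "matching E (insert f (N - {e}))"
    using assms by (intro matching_insert) (auto simp: max_matching_def matching_def)
  moreover have "card (insert f (N - {e})) = Suc (card (N - {e}))"
    using assms finN by (intro card_insert_fresh_edge) auto
  moreover have "Suc (card (N - {e})) = card N"
    using card_Suc_Diff1[OF finN \<open>e \<in> N\<close>] .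
  ultimately show ?thesis using N by (simp add: max_matching_def)
qed

lemma max_matching_no_exchange:
  assumes fin: "finite E" and N: "max_matching E N" and e: "e \<in> N"
    and "f \<in> E" "g \<in> E" "f \<noteq> {}" "g \<noteq> {}" "f \<inter> g = {}"
    and "f \<inter> \<Union>(N - {e}) = {}" "g \<inter> \<Union>(N - {e}) = {}"
  shows False
proof -
  have "max_matching E (insert f (N - {e}))"
    using assms by (intro max_matching_replace) auto
  moreover have "g \<inter> \<Union>(insert f (N - {e})) = {}" using assms by auto
  ultimately show False using max_matching_no_augment assms by blast
qed

lemma max_matching_no_augmenting_path:
  assumes fin: "finite E" and N: "max_matching E N" and bc: "{b, c} \<in> N"
    and "{a, b} \<in> E" "{c, d} \<in> E" "a \<notin> \<Union>N" "d \<notin> \<Union>N" "a \<noteq> d" "b \<noteq> c"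
  shows False
proof -
  have mN: "matching E N" using N by (simp add: max_matching_def)
  have "b \<notin> \<Union>(N - {{b, c}})" "c \<notin> \<Union>(N - {{b, c}})"
    using matching_vertex_unique[OF mN bc] by auto
  then show False
    using max_matching_no_exchange[OF fin N bc, of "{a, b}" "{c, d}"] assms bc by blast
qed

lemma L_param_upper:
  assumes fin: "finite E" and F: "max_matching E F"
  shows "nu (E - F) \<le> L_param E"
proof -
  have "{nu (E - F) | F. max_matching E F} = (\<lambda>F. nu (E - F)) ` {F. max_matching E F}" by auto
  moreover have "finite {F. max_matching E F}"
    using finite_matchings[OF fin] by (rule rev_finite_subset) (auto simp: max_matching_def)
  ultimately show ?thesis unfolding L_param_def using F by (intro Max_ge) auto
qed

definition nbrs :: "'a set set \<Rightarrow> 'a \<Rightarrow> 'a set" where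
  "nbrs E u = {z. {u, z} \<in> E}"

locale L_twice_l =
  fixes V :: "'a set" and E F Fl :: "'a set set"
  assumes graph: "graph V E"
    and L_eq: "L_param E = 2 * l_param E"
    and F_max: "max_matching E F" and F_nu: "nu (E - F) = L_param E"
    and Fl_max: "max_matching E Fl" and Fl_nu: "nu (E - Fl) = l_param E"
begin

lemma finite_E: "finite E"
proof -
  have "E \<subseteq> Pow V" using graph unfolding graph_def by fastforce
  then show ?thesis using graph unfolding graph_def by (meson finite_Pow_iff finite_subset)
qed

lemma edge_at: "e \<in> E \<Longrightarrow> a \<in> e \<Longrightarrow> \<exists>z. e = {a, z} \<and> z \<noteq> a"
  using graph unfolding graph_def by fastforce

lemma edge_distinct: "{a, b} \<in> E \<Longrightarrow> a \<noteq> b"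
  using edge_at by fastforce

lemma covered_partner: "N \<subseteq> E \<Longrightarrow> a \<in> \<Union>N \<Longrightarrow> \<exists>z. {a, z} \<in> N"
  using edge_at by blast

lemma deg_eq_card_nbrs: "deg E u = card (nbrs E u)"
proof -
  have "{e \<in> E. u \<in> e} = (\<lambda>z. {u, z}) ` nbrs E u"
    unfolding nbrs_def using edge_at by fastforce
  moreover have "inj_on (\<lambda>z. {u, z}) (nbrs E u)"
    unfolding nbrs_def inj_on_def by (metis doubleton_eq_iff)
  ultimately show ?thesis unfolding deg_def by (simp add: card_image)
qed

lemma finite_nbrs: "finite (nbrs E u)"
proof -
  have "nbrs E u \<subseteq> V"
  proof
    fix z assume "z \<in> nbrs E u"
    then obtain a b where "{u, z} = {a, b}" "a \<in> V" "b \<in> V"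
      using graph unfolding graph_def nbrs_def by blast
    then show "z \<in> V" by (auto simp: doubleton_eq_iff)
  qed
  then show ?thesis using graph finite_subset unfolding graph_def by blast
qed

lemma F_matching: "matching E F" and Fl_matching: "matching E Fl"
  using F_max Fl_max by (auto simp: max_matching_def)

lemma F_sub: "F \<subseteq> E" and Fl_sub: "Fl \<subseteq> E"
  using F_matching Fl_matching by (auto simp: matching_def)

lemma residual_counts:
  assumes M: "max_matching (E - F) M"
  shows "Fl - F \<subseteq> M" and "card (M - Fl) = l_param E" and "card (F - Fl) = l_param E"
proof -
  have mM: "matching (E - F) M" and cM: "card M = 2 * l_param E"
    using M F_nu L_eq by (auto simp: max_matching_def)
  have finM: "finite M" using max_matching_finite[OF _ M] finite_E by simp
  have finF: "finite F" and finFl: "finite Fl"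
    using max_matching_finite[OF finite_E] F_max Fl_max by auto
  have "card F = card Fl" using F_max Fl_max by (simp add: max_matching_def)
  then have c_sym: "card (Fl - F) = card (F - Fl)"
    using finF finFl by (simp add: card_Diff_subset_Int Int_commute)
  have "matching (E - Fl) (F - Fl)"
    using F_matching by (rule matching_subset) (use F_sub in auto)
  then have c_Q: "card (F - Fl) \<le> l_param E"
    using nu_upper[of "E - Fl" "F - Fl"] finite_E Fl_nu by simp
  have "matching (E - Fl) (M - Fl)"
    using mM by (rule matching_subset) (use mM in \<open>auto simp: matching_def\<close>)
  then have c_R: "card (M - Fl) \<le> l_param E"
    using nu_upper[of "E - Fl" "M - Fl"] finite_E Fl_nu by simp
  have sub: "M \<inter> Fl \<subseteq> Fl - F" using mM by (auto simp: matching_def)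
  have split: "card M = card (M \<inter> Fl) + card (M - Fl)" using finM by (rule card_Int_Diff)
  have c_I: "card (M \<inter> Fl) \<le> card (Fl - F)" using sub finFl by (intro card_mono) auto
  have eq: "card (M \<inter> Fl) = card (Fl - F)"
    using c_sym c_Q c_R split c_I cM by linarith
  show "card (M - Fl) = l_param E" using c_sym c_Q c_R split c_I cM by linarith
  show "card (F - Fl) = l_param E" using c_sym c_Q c_R split c_I cM by linarith
  have "M \<inter> Fl = Fl - F" using sub eq finFl by (intro card_subset_eq) auto
  then show "Fl - F \<subseteq> M" by auto
qed

lemma residual_max_matchings:
  assumes M: "max_matching (E - F) M"
  shows "max_matching (E - Fl) (M - Fl)" and "max_matching (E - Fl) (F - Fl)"
  using residual_counts[OF M] M F_matching Fl_nu
  by (auto simp: max_matching_def matching_def)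

lemma residual_avoids:
  assumes M: "max_matching (E - F) M" and "e \<in> Fl - F" "a \<in> e"
  shows "a \<notin> \<Union>(M - Fl)"
proof -
  have "matching (E - F) M" using M by (simp add: max_matching_def)
  then have "a \<notin> \<Union>(M - {e})"
    using assms residual_counts(1)[OF M] by (intro matching_vertex_unique) auto
  then show ?thesis using assms by auto
qed

lemma no_alternating_F_Fl_F:
  assumes M: "max_matching (E - F) M"
    and v_R: "v \<in> \<Union>(M - Fl)" and v_Fl: "v \<notin> \<Union>Fl"
    and vx: "{v, x} \<in> F" and xt: "{x, t} \<in> Fl" and ts: "{t, s} \<in> F"
  shows False
proof -
  have xt_ne: "x \<noteq> t" using xt Fl_sub edge_distinct by blast
  have tv: "t \<noteq> v" using xt v_Fl by auto
  have xt_F: "{x, t} \<notin> F"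
    using matching_partner_unique[OF F_matching, of x v t] vx tv by (auto simp: insert_commute)
  have sx: "s \<noteq> x" using ts xt_F by (auto simp: insert_commute)
  have sv: "s \<noteq> v"
    using matching_partner_unique[OF F_matching, of v x t] vx ts xt_ne by (auto simp: insert_commute)
  have ts_Fl: "{t, s} \<notin> Fl"
    using matching_partner_unique[OF Fl_matching, of t x s] xt sx by (auto simp: insert_commute)
  have "s \<in> \<Union>Fl"
  proof (rule ccontr)
    assume "s \<notin> \<Union>Fl"
    then show False
      using max_matching_no_augmenting_path[OF finite_E Fl_max xt, of v s] vx ts F_sub
        v_Fl sv xt_ne by (auto simp: insert_commute)
  qed
  then obtain r where sr: "{s, r} \<in> Fl" using covered_partner Fl_sub by blast
  have "{s, r} \<notin> F"
    using matching_partner_unique[OF F_matching, of s t r] ts ts_Fl sr by (auto simp: insert_commute)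
  then have free: "s \<notin> \<Union>(M - Fl)" "x \<notin> \<Union>(M - Fl)" "t \<notin> \<Union>(M - Fl)"
    using residual_avoids[OF M] sr xt xt_F by blast+
  have "M - Fl \<subseteq> E" using M by (auto simp: max_matching_def matching_def)
  then obtain y where vy: "{v, y} \<in> M - Fl" using v_R covered_partner by blast
  have R_max: "max_matching (E - Fl) (M - Fl)" by (rule residual_max_matchings(1)[OF M])
  have "v \<notin> \<Union>(M - Fl - {{v, y}})"
    using R_max vy by (intro matching_vertex_unique) (auto simp: max_matching_def)
  moreover have "{v, x} \<in> E - Fl" "{t, s} \<in> E - Fl" using vx ts F_sub v_Fl ts_Fl by auto
  ultimately show False
    using max_matching_no_exchange[OF _ R_max vy, of "{v, x}" "{t, s}"] finite_E
      free tv sv xt_ne sx by auto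
qed

lemma F_joins_neighbours:
  assumes uw: "{u, w} \<in> Fl" and u_F: "u \<notin> \<Union>F" and uv: "{u, v} \<in> E" and vw: "v \<noteq> w"
  shows "{v, w} \<in> F"
proof -
  obtain M where M: "max_matching (E - F) M" using nu_attained finite_E by blast
  have uv_Fl: "{u, v} \<notin> Fl" using matching_partner_unique[OF Fl_matching uw] vw by auto
  have u_free: "u \<notin> \<Union>(F - Fl)" "u \<notin> \<Union>(M - Fl)"
    using u_F residual_avoids[OF M, of "{u, w}"] uw by auto
  have uv_res: "{u, v} \<in> E - Fl" "{u, v} \<noteq> {}" using uv uv_Fl by auto
  have "{u, v} \<inter> \<Union>(F - Fl) \<noteq> {}" "{u, v} \<inter> \<Union>(M - Fl) \<noteq> {}"
    using max_matching_no_augment[OF _ residual_max_matchings(2)[OF M] uv_res]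
      max_matching_no_augment[OF _ residual_max_matchings(1)[OF M] uv_res] finite_E by auto
  then have "v \<in> \<Union>(F - Fl)" and v_R: "v \<in> \<Union>(M - Fl)" using u_free by auto
  then obtain x where vx: "{v, x} \<in> F - Fl" using covered_partner F_sub by blast
  have v_Fl: "v \<notin> \<Union>Fl"
  proof
    assume "v \<in> \<Union>Fl"
    then obtain s where vs: "{v, s} \<in> Fl" using covered_partner Fl_sub by blast
    show False
    proof (cases "{v, s} \<in> F")
      case True
      then show False using matching_partner_unique[OF F_matching, of v x s] vx vs by auto
    next
      case False
      then show False using residual_avoids[OF M, of "{v, s}" v] vs v_R by auto
    qed
  qed
  show ?thesis
  proof (rule ccontr)
    assume "{v, w} \<notin> F"
    then have xw: "x \<noteq> w" using vx by auto
    have "{v, x} \<inter> \<Union>Fl \<noteq> {}"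
      using max_matching_no_augment[OF finite_E Fl_max, of "{v, x}"] vx F_sub by auto
    then obtain t where xt: "{x, t} \<in> Fl" using v_Fl covered_partner Fl_sub by blast
    have tu: "t \<noteq> u"
      using matching_partner_unique[OF Fl_matching, of u w x] uw xt xw by (auto simp: insert_commute)
    have "t \<in> \<Union>F"
    proof (rule ccontr)
      assume "t \<notin> \<Union>F"
      moreover have "{x, t} \<in> E" "v \<noteq> x" using xt vx Fl_sub F_sub edge_distinct by auto
      ultimately show False
        using max_matching_no_augmenting_path[OF finite_E F_max, of v x u t] vx uv u_F tu
        by (auto simp: insert_commute)
    qed
    then obtain s where "{t, s} \<in> F" using covered_partner F_sub by blast
    then show False using no_alternating_F_Fl_F[OF M v_R v_Fl _ xt] vx by blast
  qed
qed

text \<open>Part (a), degree of u: besides its Fl-partner w, the vertex u has at most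
  one further neighbour, namely the F-partner of w.\<close>
lemma Fl_only_nbrs:
  assumes uw: "{u, w} \<in> Fl" and u_F: "u \<notin> \<Union>F"
  shows "nbrs E u = {w} \<or> (\<exists>v. v \<noteq> w \<and> nbrs E u = {w, v})"
proof (cases "nbrs E u \<subseteq> {w}")
  case True
  then show ?thesis using uw Fl_sub unfolding nbrs_def by blast
next
  case False
  then obtain v where uv: "{u, v} \<in> E" and vw: "v \<noteq> w" unfolding nbrs_def by blast
  have "z = v" if "{u, z} \<in> E" "z \<noteq> w" for z
  proof -
    have "{z, w} \<in> F" "{v, w} \<in> F" using F_joins_neighbours[OF uw u_F] that uv vw by auto
    then have "{w, z} \<in> F" "{w, v} \<in> F" by (simp_all add: insert_commute)
    then show "z = v" by (rule matching_partner_unique[OF F_matching])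
  qed
  then have "nbrs E u = {w, v}" using uw uv Fl_sub unfolding nbrs_def by blast
  then show ?thesis using vw by blast
qed

text \<open>Swapping vw for uv in F gives a maximum matching F' that still
  realises L, and w is not covered by F'; the first half of part (a) applied
  to F' shows that every neighbour of w other than u is matched to u by F'.\<close>
lemma Fl_partner_nbrs:
  assumes uw: "{u, w} \<in> Fl" and u_F: "u \<notin> \<Union>F" and uv: "{u, v} \<in> E" and vw: "v \<noteq> w"
  shows "nbrs E w = {u, v}"
proof -
  have vwF: "{v, w} \<in> F" using F_joins_neighbours[OF assms] .
  have uw_ne: "u \<noteq> w" using uw Fl_sub edge_distinct by auto
  obtain M where M: "max_matching (E - F) M" using nu_attained finite_E by blast
  define F' where "F' = insert {u, v} (F - {{v, w}})"
  have v_rest: "v \<notin> \<Union>(F - {{v, w}})" and w_rest: "w \<notin> \<Union>(F - {{v, w}})"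
    using matching_vertex_unique[OF F_matching vwF] by auto
  have F'_max: "max_matching E F'"
    unfolding F'_def using u_F v_rest uv vwF
    by (intro max_matching_replace[OF finite_E F_max]) auto
  have "{u, w} \<in> M" using residual_counts(1)[OF M] uw u_F by auto
  then have "{u, v} \<notin> M"
    using M matching_partner_unique[of "E - F" M u w v] vw by (auto simp: max_matching_def)
  then have "matching (E - F') M"
    using M unfolding F'_def by (auto simp: max_matching_def matching_def)
  then have "L_param E \<le> nu (E - F')"
    using nu_upper[of "E - F'" M] finite_E M F_nu by (auto simp: max_matching_def)
  then have F'_nu: "nu (E - F') = L_param E"
    using L_param_upper[OF finite_E F'_max] by linarith
  interpret F': L_twice_l V E F' Fl
    using graph L_eq F'_max F'_nu Fl_max Fl_nu by unfold_locales
  have w_F': "w \<notin> \<Union>F'" unfolding F'_def using w_rest uw_ne vw by auto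
  have wu: "{w, u} \<in> Fl" using uw by (simp add: insert_commute)
  have "z = v" if "{w, z} \<in> E" "z \<noteq> u" for z
  proof -
    have "{z, u} \<in> F'" using F'.F_joins_neighbours[OF wu w_F'] that by blast
    then show "z = v" unfolding F'_def using u_F by (auto simp: doubleton_eq_iff)
  qed
  then show ?thesis using uw uv vwF Fl_sub F_sub unfolding nbrs_def
    by (auto simp: insert_commute)
qed

text \<open>Part (b): a vertex covered by F but not by Fl has degree at least 2.
  Otherwise its only edge ux lies in E - Fl and is disjoint from M - Fl (x is
  covered by an edge of Fl - F), so M - Fl would not be maximum in E - Fl.\<close>
lemma F_only_degree:
  assumes u_F: "u \<in> \<Union>F" and u_Fl: "u \<notin> \<Union>Fl"
  shows "2 \<le> deg E u"
proof (rule ccontr)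
  assume "\<not> 2 \<le> deg E u"
  then have small: "card (nbrs E u) \<le> Suc 0" using deg_eq_card_nbrs by simp
  obtain M where M: "max_matching (E - F) M" using nu_attained finite_E by blast
  obtain x where ux: "{u, x} \<in> F" using covered_partner F_sub u_F by blast
  have "\<forall>a\<in>nbrs E u. \<forall>b\<in>nbrs E u. a = b"
    using small card_le_Suc0_iff_eq[OF finite_nbrs] by blast
  then have only_x: "z = x" if "{u, z} \<in> E" for z
    using ux F_sub that unfolding nbrs_def by blast
  have ux_res: "{u, x} \<in> E - Fl" "{u, x} \<noteq> {}" using ux F_sub u_Fl by auto
  have "{u, x} \<inter> \<Union>Fl \<noteq> {}" using max_matching_no_augment[OF finite_E Fl_max] ux_res by auto
  then obtain t where xt: "{x, t} \<in> Fl" using u_Fl covered_partner Fl_sub by blast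
  have "t \<noteq> u" using xt u_Fl by auto
  then have "{x, t} \<notin> F"
    using matching_partner_unique[OF F_matching, of x u t] ux by (auto simp: insert_commute)
  then have x_R: "x \<notin> \<Union>(M - Fl)" using residual_avoids[OF M] xt by blast
  have u_R: "u \<notin> \<Union>(M - Fl)"
  proof
    assume "u \<in> \<Union>(M - Fl)"
    moreover have "M - Fl \<subseteq> E" using M by (auto simp: max_matching_def matching_def)
    ultimately obtain z where "{u, z} \<in> M - Fl" using covered_partner by blast
    moreover from this have "z = x" using only_x \<open>M - Fl \<subseteq> E\<close> by blast
    ultimately show False using ux M by (auto simp: max_matching_def matching_def)
  qed
  show False
    using max_matching_no_augment[OF _ residual_max_matchings(1)[OF M] ux_res] finite_E x_R u_R
    by auto
qed

end

theorem claim3: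
  fixes V :: "'a set" and E FL Fl :: "'a set set"
  assumes "graph V E"
    and "connected_graph V E"
    and "card V \<ge> 3"
    and "L_param E = 2 * l_param E"
    and "max_matching E FL" and "nu (E - FL) = L_param E"
    and "max_matching E Fl" and "nu (E - Fl) = l_param E"
  shows "(\<forall>u \<in> Vs Fl - Vs FL.
            deg E u \<in> {1, 2} \<and>
            (deg E u = 2 \<longrightarrow>
              (\<forall>v w. v \<noteq> w \<and> {u, v} \<in> E \<and> {u, w} \<in> E \<and> {u, w} \<in> Fl \<longrightarrow>
                 deg E w = 2 \<and> {v, w} \<in> FL)))
       \<and> (\<forall>u \<in> Vs FL - Vs Fl. deg E u \<ge> 2)"
proof -
  interpret L_twice_l V E FL Fl
    using assms(1,4-8) by unfold_locales
  have deg_Fl_only: "deg E u \<in> {1, 2}" if u_Fl: "u \<in> \<Union>Fl" and u_F: "u \<notin> \<Union>FL" for u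
  proof -
    obtain w where uw: "{u, w} \<in> Fl" using covered_partner[OF Fl_sub u_Fl] by blast
    consider "nbrs E u = {w}" | v where "v \<noteq> w" "nbrs E u = {w, v}"
      using Fl_only_nbrs[OF uw u_F] by blast
    then show ?thesis by cases (simp_all add: deg_eq_card_nbrs)
  qed
  have Fl_partner: "deg E w = 2 \<and> {v, w} \<in> FL"
    if "u \<notin> \<Union>FL" "v \<noteq> w" "{u, v} \<in> E" "{u, w} \<in> Fl" for u v w
  proof -
    have "nbrs E w = {u, v}" "u \<noteq> v"
      using Fl_partner_nbrs[OF that(4,1,3,2)] edge_distinct[OF that(3)] by auto
    then show ?thesis
      using F_joins_neighbours[OF that(4,1,3,2)] by (simp add: deg_eq_card_nbrs)
  qed
  show ?thesis
  proof (intro conjI ballI)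
    fix u assume "u \<in> Vs Fl - Vs FL"
    then have u: "u \<in> \<Union>Fl" "u \<notin> \<Union>FL" by (auto simp: Vs_def)
    then show "deg E u \<in> {1, 2}" by (rule deg_Fl_only)
    show "deg E u = 2 \<longrightarrow> (\<forall>v w. v \<noteq> w \<and> {u, v} \<in> E \<and> {u, w} \<in> E \<and> {u, w} \<in> Fl \<longrightarrow>
            deg E w = 2 \<and> {v, w} \<in> FL)"
      using Fl_partner u(2) by blast
  next
    fix u assume "u \<in> Vs FL - Vs Fl"
    then show "2 \<le> deg E u" using F_only_degree by (auto simp: Vs_def)
  qed
qed

end
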